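(* Let $(\mathfrak g,[\cdot,\cdot],\alpha,\varepsilon)$ be a color Hom-Lie algebra and $\theta$ an even element of the centroid of $\mathfrak g$. Define even brackets $[x,y]_1^\theta=[\theta(x),y]$ and $[x,y]_2^\theta=[\theta(x),\theta(y)]$. Then each of the following is a color Hom-Lie algebra: (i) $(\mathfrak g,[\cdot,\cdot],\theta\circ\alpha,\varepsilon)$, $(\mathfrak g,[\cdot,\cdot]_1^\theta,\theta\circ\alpha,\varepsilon)$, $(\mathfrak g,[\cdot,\cdot]_2^\theta,\theta\circ\alpha,\varepsilon)$; (ii) $(\mathfrak g,[\cdot,\cdot],\alpha\circ\theta,\varepsilon)$, $(\mathfrak g,[\cdot,\cdot]_1^\theta,\alpha\circ\theta,\varepsilon)$, $(\mathfrak g,[\cdot,\cdot]_2^\theta,\alpha\circ\theta,\varepsilon)$.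
   Context: $\mathbb K$ is a field of characteristic zero and $\Gamma$ an abelian group. A bicharacter is a map $\varepsilon:\Gamma\times\Gamma\to\mathbb K\setminus\{0\}$ with $\varepsilon(a,b)\varepsilon(b,a)=1$, $\varepsilon(a,b+c)=\varepsilon(a,b)\varepsilon(a,c)$, $\varepsilon(a+b,c)=\varepsilon(a,c)\varepsilon(b,c)$; for homogeneous $x,y$, $\varepsilon(x,y)$ means $\varepsilon(\deg x,\deg y)$. Even maps preserve degree. A color Hom-Lie algebra $(\mathfrak g,[\cdot,\cdot],\alpha,\varepsilon)$ is a $\Gamma$-graded vector space with even bilinear bracket and even linear $\alpha$ such that, for homogeneous $x,y,z$, $[x,y]=-\varepsilon(x,y)[y,x]$ and $\varepsilon(z,x)[\alpha(x),[y,z]]+\varepsilon(x,y)[\alpha(y),[z,x]]+\varepsilon(y,z)[\alpha(z),[x,y]]=0$. The centroid of $\mathfrak g$ is the set of homogeneous linear maps $\theta:\mathfrak g\to\mathfrak g$ (and their sums) with $\theta([x,y])=[\theta(x),y]=\varepsilon(\theta,x)[x,\theta(y)]$ for all homogeneous $x,y$; for even $\theta$ this reads $\theta([x,y])=[\theta(x),y]=[x,\theta(y)]$. *)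

theory Defs
  imports Complex_Main
begin

text \<open>A vector space over a field 'k (characteristic zero imposed by the type class
  in the theorem) is given by a scalar multiplication scale :: 'k => 'v => 'v.\<close>

definition graded_space :: "('k::field \<Rightarrow> 'v::ab_group_add \<Rightarrow> 'v) \<Rightarrow> ('g \<Rightarrow> 'v set) \<Rightarrow> bool" where
  "graded_space scale gr \<longleftrightarrow>
     Vector_Spaces.vector_space scale \<and>
     (\<forall>a. 0 \<in> gr a \<and> (\<forall>x\<in>gr a. \<forall>y\<in>gr a. x + y \<in> gr a)
            \<and> (\<forall>k. \<forall>x\<in>gr a. scale k x \<in> gr a)) \<and>
     (\<forall>v. \<exists>!c :: 'g \<Rightarrow> 'v. finite {a. c a \<noteq> 0} \<and> (\<forall>a. c a \<in> gr a)
                         \<and> v = sum c {a. c a \<noteq> 0})"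

definition bicharacter :: "('g::ab_group_add \<Rightarrow> 'g \<Rightarrow> 'k::field) \<Rightarrow> bool" where
  "bicharacter \<epsilon> \<longleftrightarrow>
     (\<forall>a b. \<epsilon> a b \<noteq> 0) \<and>
     (\<forall>a b. \<epsilon> a b * \<epsilon> b a = 1) \<and>
     (\<forall>a b c. \<epsilon> a (b + c) = \<epsilon> a b * \<epsilon> a c) \<and>
     (\<forall>a b c. \<epsilon> (a + b) c = \<epsilon> a c * \<epsilon> b c)"

definition even_map :: "('g \<Rightarrow> 'v set) \<Rightarrow> ('v \<Rightarrow> 'v) \<Rightarrow> bool" where
  "even_map gr f \<longleftrightarrow> (\<forall>a. \<forall>x\<in>gr a. f x \<in> gr a)"

definition even_bracket :: "('g::ab_group_add \<Rightarrow> 'v set) \<Rightarrow> ('v \<Rightarrow> 'v \<Rightarrow> 'v) \<Rightarrow> bool" where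
  "even_bracket gr br \<longleftrightarrow> (\<forall>a b. \<forall>x\<in>gr a. \<forall>y\<in>gr b. br x y \<in> gr (a + b))"

definition bilinear_map :: "('k::field \<Rightarrow> 'v::ab_group_add \<Rightarrow> 'v) \<Rightarrow> ('v \<Rightarrow> 'v \<Rightarrow> 'v) \<Rightarrow> bool" where
  "bilinear_map scale br \<longleftrightarrow>
     (\<forall>x. Vector_Spaces.linear scale scale (br x)) \<and>
     (\<forall>y. Vector_Spaces.linear scale scale (\<lambda>x. br x y))"

definition color_hom_lie ::
  "('k::field \<Rightarrow> 'v::ab_group_add \<Rightarrow> 'v) \<Rightarrow> ('g::ab_group_add \<Rightarrow> 'v set)
     \<Rightarrow> ('v \<Rightarrow> 'v \<Rightarrow> 'v) \<Rightarrow> ('v \<Rightarrow> 'v) \<Rightarrow> ('g \<Rightarrow> 'g \<Rightarrow> 'k) \<Rightarrow> bool" where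
  "color_hom_lie scale gr br \<alpha> \<epsilon> \<longleftrightarrow>
     graded_space scale gr \<and> bicharacter \<epsilon> \<and>
     bilinear_map scale br \<and> even_bracket gr br \<and>
     Vector_Spaces.linear scale scale \<alpha> \<and> even_map gr \<alpha> \<and>
     (\<forall>a b. \<forall>x\<in>gr a. \<forall>y\<in>gr b. br x y = - scale (\<epsilon> a b) (br y x)) \<and>
     (\<forall>a b c. \<forall>x\<in>gr a. \<forall>y\<in>gr b. \<forall>z\<in>gr c.
        scale (\<epsilon> c a) (br (\<alpha> x) (br y z)) + scale (\<epsilon> a b) (br (\<alpha> y) (br z x))
          + scale (\<epsilon> b c) (br (\<alpha> z) (br x y)) = 0)"

text \<open>Even (degree-zero homogeneous) elements of the centroid: for even theta the
  colour factor epsilon(theta,x) equals 1.\<close>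
definition even_centroid ::
  "('k::field \<Rightarrow> 'v::ab_group_add \<Rightarrow> 'v) \<Rightarrow> ('g \<Rightarrow> 'v set) \<Rightarrow> ('v \<Rightarrow> 'v \<Rightarrow> 'v) \<Rightarrow> ('v \<Rightarrow> 'v) \<Rightarrow> bool" where
  "even_centroid scale gr br \<theta> \<longleftrightarrow>
     Vector_Spaces.linear scale scale \<theta> \<and> even_map gr \<theta> \<and>
     (\<forall>a b. \<forall>x\<in>gr a. \<forall>y\<in>gr b.
        \<theta> (br x y) = br (\<theta> x) y \<and> br (\<theta> x) y = br x (\<theta> y))"

end

theory Submission
  imports Defs
begin

text \<open>The point is the Hom-Jacobi identity: on homogeneous elements each new Jacobiator is
  the image of the old one under a power of \<open>\<theta>\<close>, obtained by moving every \<open>\<theta>\<close> to the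
  outside with the centroid identities. The only term where this is not immediate is
  \<open>[\<alpha>(\<theta> x), [y, z]]\<close>; it equals \<open>\<theta>[\<alpha> x, [y, z]]\<close> because the Jacobiators at
  \<open>(\<theta> x, y, z)\<close> and \<open>\<theta>\<close> applied at \<open>(x, y, z)\<close> both vanish and agree in their other two terms.\<close>

definition homogeneous :: "('g \<Rightarrow> 'v set) \<Rightarrow> 'v \<Rightarrow> bool" where
  "homogeneous gr x \<longleftrightarrow> (\<exists>a. x \<in> gr a)"

definition color_skew_symmetric ::
  "('k \<Rightarrow> 'v::ab_group_add \<Rightarrow> 'v) \<Rightarrow> ('g \<Rightarrow> 'v set) \<Rightarrow> ('v \<Rightarrow> 'v \<Rightarrow> 'v) \<Rightarrow> ('g \<Rightarrow> 'g \<Rightarrow> 'k) \<Rightarrow> bool" where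
  "color_skew_symmetric scale gr br \<epsilon> \<longleftrightarrow>
     (\<forall>a b. \<forall>x\<in>gr a. \<forall>y\<in>gr b. br x y = - scale (\<epsilon> a b) (br y x))"

definition color_hom_jacobi ::
  "('k \<Rightarrow> 'v::ab_group_add \<Rightarrow> 'v) \<Rightarrow> ('g \<Rightarrow> 'v set) \<Rightarrow> ('v \<Rightarrow> 'v \<Rightarrow> 'v) \<Rightarrow> ('v \<Rightarrow> 'v)
     \<Rightarrow> ('g \<Rightarrow> 'g \<Rightarrow> 'k) \<Rightarrow> bool" where
  "color_hom_jacobi scale gr br \<alpha> \<epsilon> \<longleftrightarrow>
     (\<forall>a b c. \<forall>x\<in>gr a. \<forall>y\<in>gr b. \<forall>z\<in>gr c.
        scale (\<epsilon> c a) (br (\<alpha> x) (br y z)) + scale (\<epsilon> a b) (br (\<alpha> y) (br z x))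
          + scale (\<epsilon> b c) (br (\<alpha> z) (br x y)) = 0)"

lemma color_hom_lie_iff:
  "color_hom_lie scale gr br \<alpha> \<epsilon> \<longleftrightarrow>
     graded_space scale gr \<and> bicharacter \<epsilon> \<and> bilinear_map scale br \<and> even_bracket gr br \<and>
     Vector_Spaces.linear scale scale \<alpha> \<and> even_map gr \<alpha> \<and>
     color_skew_symmetric scale gr br \<epsilon> \<and> color_hom_jacobi scale gr br \<alpha> \<epsilon>"
  unfolding color_hom_lie_def color_skew_symmetric_def color_hom_jacobi_def ..

lemma homogeneousI [intro]: "x \<in> gr a \<Longrightarrow> homogeneous gr x"
  unfolding homogeneous_def by blast

lemma homogeneous_even_map [simp]: "even_map gr f \<Longrightarrow> homogeneous gr x \<Longrightarrow> homogeneous gr (f x)"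
  unfolding homogeneous_def even_map_def by blast

lemma homogeneous_even_bracket [simp]:
  "even_bracket gr br \<Longrightarrow> homogeneous gr x \<Longrightarrow> homogeneous gr y \<Longrightarrow> homogeneous gr (br x y)"
  unfolding homogeneous_def even_bracket_def by blast

lemma even_map_comp: "even_map gr f \<Longrightarrow> even_map gr g \<Longrightarrow> even_map gr (f \<circ> g)"
  unfolding even_map_def by simp

lemma even_bracket_compose:
  "even_bracket gr br \<Longrightarrow> even_map gr f \<Longrightarrow> even_map gr g \<Longrightarrow> even_bracket gr (\<lambda>x y. br (f x) (g y))"
  unfolding even_bracket_def even_map_def by blast

lemma bilinear_map_compose:
  assumes "bilinear_map scale br" "Vector_Spaces.linear scale scale f" "Vector_Spaces.linear scale scale g"
  shows "bilinear_map scale (\<lambda>x y. br (f x) (g y))"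
  using assms Vector_Spaces.linear_compose unfolding bilinear_map_def comp_def by blast

lemma color_skew_symmetric_compose:
  "color_skew_symmetric scale gr br \<epsilon> \<Longrightarrow> even_map gr f \<Longrightarrow>
     color_skew_symmetric scale gr (\<lambda>x y. br (f x) (f y)) \<epsilon>"
  unfolding color_skew_symmetric_def even_map_def by blast

lemma color_hom_jacobi_transfer:
  assumes jacobi: "color_hom_jacobi scale gr br \<alpha> \<epsilon>"
    and linear: "Vector_Spaces.linear scale scale \<Phi>"
    and transfer: "\<And>x y z. homogeneous gr x \<Longrightarrow> homogeneous gr y \<Longrightarrow> homogeneous gr z \<Longrightarrow>
        br' (\<beta> x) (br' y z) = \<Phi> (br (\<alpha> x) (br y z))"
  shows "color_hom_jacobi scale gr br' \<beta> \<epsilon>"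
  unfolding color_hom_jacobi_def
proof (intro allI ballI)
  fix a b c x y z assume xyz: "x \<in> gr a" "y \<in> gr b" "z \<in> gr c"
  interpret \<Phi>: Vector_Spaces.linear scale scale \<Phi> by (fact linear)
  have "scale (\<epsilon> c a) (br' (\<beta> x) (br' y z)) + scale (\<epsilon> a b) (br' (\<beta> y) (br' z x))
          + scale (\<epsilon> b c) (br' (\<beta> z) (br' x y)) =
        \<Phi> (scale (\<epsilon> c a) (br (\<alpha> x) (br y z)) + scale (\<epsilon> a b) (br (\<alpha> y) (br z x))
          + scale (\<epsilon> b c) (br (\<alpha> z) (br x y)))"
    using xyz by (simp add: transfer homogeneousI \<Phi>.add \<Phi>.scale)
  also have "\<dots> = 0"
    using jacobi xyz unfolding color_hom_jacobi_def by simp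
  finally show "scale (\<epsilon> c a) (br' (\<beta> x) (br' y z)) + scale (\<epsilon> a b) (br' (\<beta> y) (br' z x))
          + scale (\<epsilon> b c) (br' (\<beta> z) (br' x y)) = 0" .
qed

locale color_hom_lie_centroid =
  fixes scale :: "'k::field \<Rightarrow> 'v::ab_group_add \<Rightarrow> 'v"
    and gr :: "'g::ab_group_add \<Rightarrow> 'v set"
    and br :: "'v \<Rightarrow> 'v \<Rightarrow> 'v" and \<alpha> \<theta> :: "'v \<Rightarrow> 'v"
    and \<epsilon> :: "'g \<Rightarrow> 'g \<Rightarrow> 'k"
  assumes color_hom_lie: "color_hom_lie scale gr br \<alpha> \<epsilon>"
    and centroid: "even_centroid scale gr br \<theta>"
begin

lemma graded_space: "graded_space scale gr"
  and bicharacter: "bicharacter \<epsilon>"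
  and bilinear: "bilinear_map scale br"
  and even_bracket: "even_bracket gr br"
  and alpha_linear: "Vector_Spaces.linear scale scale \<alpha>"
  and alpha_even: "even_map gr \<alpha>"
  and skew: "color_skew_symmetric scale gr br \<epsilon>"
  and jacobi: "color_hom_jacobi scale gr br \<alpha> \<epsilon>"
  using color_hom_lie unfolding color_hom_lie_iff by auto

lemma theta_linear: "Vector_Spaces.linear scale scale \<theta>"
  and theta_even: "even_map gr \<theta>"
  using centroid unfolding even_centroid_def by auto

sublocale \<theta>: Vector_Spaces.linear scale scale \<theta>
  by (fact theta_linear)

lemma vector_space: "Vector_Spaces.vector_space scale"
  using graded_space unfolding graded_space_def by blast

lemma bracket_theta_left:
  "homogeneous gr x \<Longrightarrow> homogeneous gr y \<Longrightarrow> br (\<theta> x) y = \<theta> (br x y)"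
  using centroid unfolding even_centroid_def homogeneous_def by metis

lemma bracket_theta_right:
  "homogeneous gr x \<Longrightarrow> homogeneous gr y \<Longrightarrow> br x (\<theta> y) = \<theta> (br x y)"
  using centroid unfolding even_centroid_def homogeneous_def by metis

lemmas centroid_simps = bracket_theta_left bracket_theta_right
  homogeneous_even_map[OF theta_even] homogeneous_even_map[OF alpha_even]
  homogeneous_even_bracket[OF even_bracket]

lemma color_skew_symmetric_theta_left: "color_skew_symmetric scale gr (\<lambda>x y. br (\<theta> x) y) \<epsilon>"
  using skew theta_even centroid
  unfolding color_skew_symmetric_def even_map_def even_centroid_def by metis

lemma bracket_alpha_theta:
  assumes "homogeneous gr x" "homogeneous gr y" "homogeneous gr z"
  shows "br (\<alpha> (\<theta> x)) (br y z) = \<theta> (br (\<alpha> x) (br y z))"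
proof -
  obtain a b c where xyz: "x \<in> gr a" "y \<in> gr b" "z \<in> gr c"
    using assms unfolding homogeneous_def by blast
  have "\<theta> x \<in> gr a"
    using xyz theta_even unfolding even_map_def by blast
  then have jacobi_theta_x:
    "scale (\<epsilon> c a) (br (\<alpha> (\<theta> x)) (br y z)) + scale (\<epsilon> a b) (br (\<alpha> y) (br z (\<theta> x)))
       + scale (\<epsilon> b c) (br (\<alpha> z) (br (\<theta> x) y)) = 0"
    using jacobi xyz unfolding color_hom_jacobi_def by blast
  have "\<theta> (scale (\<epsilon> c a) (br (\<alpha> x) (br y z)) + scale (\<epsilon> a b) (br (\<alpha> y) (br z x))
       + scale (\<epsilon> b c) (br (\<alpha> z) (br x y))) = 0"
    using jacobi xyz unfolding color_hom_jacobi_def by simp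
  then have "scale (\<epsilon> c a) (br (\<alpha> (\<theta> x)) (br y z)) = scale (\<epsilon> c a) (\<theta> (br (\<alpha> x) (br y z)))"
    using jacobi_theta_x assms
    by (simp add: centroid_simps \<theta>.add \<theta>.scale add.assoc add_eq_0_iff2)
  moreover have "\<epsilon> c a \<noteq> 0"
    using bicharacter unfolding bicharacter_def by blast
  ultimately show ?thesis
    using vector_space.scale_cancel_left[OF vector_space] by blast
qed

lemma color_hom_lie_twisted:
  assumes linear: "Vector_Spaces.linear scale scale \<beta>" and even: "even_map gr \<beta>"
    and twist: "\<And>x y z. homogeneous gr x \<Longrightarrow> homogeneous gr y \<Longrightarrow> homogeneous gr z \<Longrightarrow>
        br (\<beta> x) (br y z) = \<theta> (br (\<alpha> x) (br y z))"
  shows "color_hom_lie scale gr br \<beta> \<epsilon>"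
    and "color_hom_lie scale gr (\<lambda>x y. br (\<theta> x) y) \<beta> \<epsilon>"
    and "color_hom_lie scale gr (\<lambda>x y. br (\<theta> x) (\<theta> y)) \<beta> \<epsilon>"
proof -
  have id_linear: "Vector_Spaces.linear scale scale id"
    using vector_space by (simp add: Vector_Spaces.linear_iff)
  have id_even: "even_map gr id"
    unfolding even_map_def by simp
  have [simp]: "homogeneous gr x \<Longrightarrow> homogeneous gr (\<beta> x)" for x
    using even by simp
  note common = graded_space bicharacter linear even
  show "color_hom_lie scale gr br \<beta> \<epsilon>"
    unfolding color_hom_lie_iff
    using common bilinear even_bracket skew
      color_hom_jacobi_transfer[OF jacobi theta_linear twist] by blast
  show "color_hom_lie scale gr (\<lambda>x y. br (\<theta> x) y) \<beta> \<epsilon>"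
    unfolding color_hom_lie_iff
    using common color_skew_symmetric_theta_left
      bilinear_map_compose[OF bilinear theta_linear id_linear]
      even_bracket_compose[OF even_bracket theta_even id_even]
      color_hom_jacobi_transfer[OF jacobi Vector_Spaces.linear_compose[OF theta_linear
        Vector_Spaces.linear_compose[OF theta_linear theta_linear]], of _ \<beta>]
    by (simp add: centroid_simps twist)
  show "color_hom_lie scale gr (\<lambda>x y. br (\<theta> x) (\<theta> y)) \<beta> \<epsilon>"
    unfolding color_hom_lie_iff
    using common color_skew_symmetric_compose[OF skew theta_even]
      bilinear_map_compose[OF bilinear theta_linear theta_linear]
      even_bracket_compose[OF even_bracket theta_even theta_even]
      color_hom_jacobi_transfer[OF jacobi Vector_Spaces.linear_compose[OF theta_linear
        Vector_Spaces.linear_compose[OF theta_linear Vector_Spaces.linear_compose[OF theta_linear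
          Vector_Spaces.linear_compose[OF theta_linear theta_linear]]]], of _ \<beta>]
    by (simp add: centroid_simps twist)
qed

end

theorem mainTheorem3:
  fixes scale :: "'k::field_char_0 \<Rightarrow> 'v::ab_group_add \<Rightarrow> 'v"
    and gr :: "'g::ab_group_add \<Rightarrow> 'v set"
    and br :: "'v \<Rightarrow> 'v \<Rightarrow> 'v" and \<alpha> \<theta> :: "'v \<Rightarrow> 'v"
    and \<epsilon> :: "'g \<Rightarrow> 'g \<Rightarrow> 'k"
  assumes "color_hom_lie scale gr br \<alpha> \<epsilon>"
    and "even_centroid scale gr br \<theta>"
  shows "color_hom_lie scale gr br (\<theta> \<circ> \<alpha>) \<epsilon>
       \<and> color_hom_lie scale gr (\<lambda>x y. br (\<theta> x) y) (\<theta> \<circ> \<alpha>) \<epsilon>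
       \<and> color_hom_lie scale gr (\<lambda>x y. br (\<theta> x) (\<theta> y)) (\<theta> \<circ> \<alpha>) \<epsilon>
       \<and> color_hom_lie scale gr br (\<alpha> \<circ> \<theta>) \<epsilon>
       \<and> color_hom_lie scale gr (\<lambda>x y. br (\<theta> x) y) (\<alpha> \<circ> \<theta>) \<epsilon>
       \<and> color_hom_lie scale gr (\<lambda>x y. br (\<theta> x) (\<theta> y)) (\<alpha> \<circ> \<theta>) \<epsilon>"
proof -
  interpret color_hom_lie_centroid scale gr br \<alpha> \<theta> \<epsilon>
    using assms by unfold_locales
  have "br ((\<theta> \<circ> \<alpha>) x) (br y z) = \<theta> (br (\<alpha> x) (br y z))"
    if "homogeneous gr x" "homogeneous gr y" "homogeneous gr z" for x y z
    using that by (simp add: centroid_simps)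
  note theta_alpha = color_hom_lie_twisted[OF
      Vector_Spaces.linear_compose[OF alpha_linear theta_linear]
      even_map_comp[OF theta_even alpha_even] this]
  have "br ((\<alpha> \<circ> \<theta>) x) (br y z) = \<theta> (br (\<alpha> x) (br y z))"
    if "homogeneous gr x" "homogeneous gr y" "homogeneous gr z" for x y z
    using that by (simp add: bracket_alpha_theta)
  note alpha_theta = color_hom_lie_twisted[OF
      Vector_Spaces.linear_compose[OF theta_linear alpha_linear]
      even_map_comp[OF alpha_even theta_even] this]
  show ?thesis
    using theta_alpha alpha_theta by blast
qed

end
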